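(* If $(P,\tau,\leq)$ is a Priestley space, then $\tau \subseteq \tau_o(P)$.
   Context: A Priestley space is a triple $(P,\tau,\leq)$ where $(P,\leq)$ is a partially ordered set and $\tau$ is a compact topology on $P$ such that the space is totally order-disconnected: whenever $x\not\leq y$ there is a $\tau$-clopen up-set $U$ (i.e. $u\in U$, $u\leq v$ imply $v\in U$) with $x\in U$ and $y\notin U$. For $A\subseteq P$ let $A^l=\{x\in P: x\leq a \text{ for all } a\in A\}$ and $A^u=\{x\in P: x\geq a\text{ for all } a\in A\}$; for a family $\mathcal{S}$ of subsets of $P$ let $\mathcal{S}^l=\bigcup\{S^l: S\in\mathcal{S}\}$ and $\mathcal{S}^u=\bigcup\{S^u:S\in\mathcal{S}\}$. $\bigwedge A$ denotes the greatest element of $A^l$ (if it exists) and $\bigvee A$ the least element of $A^u$ (if it exists). A filter $\mathcal{F}$ on $P$ (a nonempty family of subsets of $P$ not containing $\emptyset$, closed under finite intersections and supersets) order-converges to $x\in P$ if $\bigwedge \mathcal{F}^u = x = \bigvee \mathcal{F}^l$. The order convergence topology is $\tau_o(P)=\{U\subseteq P: \text{for every } x\in U \text{ and every filter } \mathcal{F} \text{ on } P \text{ order-converging to } x, \ U\in\mathcal{F}\}$. *)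

theory Defs
  imports "HOL-Analysis.Analysis"
begin

definition partial_order_on_set :: "'a set \<Rightarrow> ('a \<Rightarrow> 'a \<Rightarrow> bool) \<Rightarrow> bool" where
  "partial_order_on_set P le \<longleftrightarrow>
     (\<forall>x\<in>P. le x x) \<and>
     (\<forall>x\<in>P. \<forall>y\<in>P. le x y \<and> le y x \<longrightarrow> x = y) \<and>
     (\<forall>x\<in>P. \<forall>y\<in>P. \<forall>z\<in>P. le x y \<and> le y z \<longrightarrow> le x z)"

definition is_up_set :: "'a set \<Rightarrow> ('a \<Rightarrow> 'a \<Rightarrow> bool) \<Rightarrow> 'a set \<Rightarrow> bool" where
  "is_up_set P le U \<longleftrightarrow> U \<subseteq> P \<and> (\<forall>u\<in>U. \<forall>v\<in>P. le u v \<longrightarrow> v \<in> U)"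

definition priestley_space :: "'a topology \<Rightarrow> ('a \<Rightarrow> 'a \<Rightarrow> bool) \<Rightarrow> bool" where
  "priestley_space tau le \<longleftrightarrow>
     partial_order_on_set (topspace tau) le \<and>
     compact_space tau \<and>
     (\<forall>x\<in>topspace tau. \<forall>y\<in>topspace tau. \<not> le x y \<longrightarrow>
        (\<exists>U. closedin tau U \<and> openin tau U \<and> is_up_set (topspace tau) le U \<and> x \<in> U \<and> y \<notin> U))"

definition lower_bounds :: "'a set \<Rightarrow> ('a \<Rightarrow> 'a \<Rightarrow> bool) \<Rightarrow> 'a set \<Rightarrow> 'a set" where
  "lower_bounds P le A = {x\<in>P. \<forall>a\<in>A. le x a}"

definition upper_bounds :: "'a set \<Rightarrow> ('a \<Rightarrow> 'a \<Rightarrow> bool) \<Rightarrow> 'a set \<Rightarrow> 'a set" where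
  "upper_bounds P le A = {x\<in>P. \<forall>a\<in>A. le a x}"

definition fam_lower :: "'a set \<Rightarrow> ('a \<Rightarrow> 'a \<Rightarrow> bool) \<Rightarrow> 'a set set \<Rightarrow> 'a set" where
  "fam_lower P le S = (\<Union>A\<in>S. lower_bounds P le A)"

definition fam_upper :: "'a set \<Rightarrow> ('a \<Rightarrow> 'a \<Rightarrow> bool) \<Rightarrow> 'a set set \<Rightarrow> 'a set" where
  "fam_upper P le S = (\<Union>A\<in>S. upper_bounds P le A)"

definition is_meet :: "'a set \<Rightarrow> ('a \<Rightarrow> 'a \<Rightarrow> bool) \<Rightarrow> 'a set \<Rightarrow> 'a \<Rightarrow> bool" where
  "is_meet P le A x \<longleftrightarrow> x \<in> lower_bounds P le A \<and> (\<forall>y\<in>lower_bounds P le A. le y x)"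

definition is_join :: "'a set \<Rightarrow> ('a \<Rightarrow> 'a \<Rightarrow> bool) \<Rightarrow> 'a set \<Rightarrow> 'a \<Rightarrow> bool" where
  "is_join P le A x \<longleftrightarrow> x \<in> upper_bounds P le A \<and> (\<forall>y\<in>upper_bounds P le A. le x y)"

definition set_filter_on :: "'a set \<Rightarrow> 'a set set \<Rightarrow> bool" where
  "set_filter_on P F \<longleftrightarrow>
     F \<noteq> {} \<and> (\<forall>A\<in>F. A \<subseteq> P) \<and> {} \<notin> F \<and>
     (\<forall>A\<in>F. \<forall>B\<in>F. A \<inter> B \<in> F) \<and>
     (\<forall>A\<in>F. \<forall>B. A \<subseteq> B \<and> B \<subseteq> P \<longrightarrow> B \<in> F)"

definition order_converges :: "'a set \<Rightarrow> ('a \<Rightarrow> 'a \<Rightarrow> bool) \<Rightarrow> 'a set set \<Rightarrow> 'a \<Rightarrow> bool" where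
  "order_converges P le F x \<longleftrightarrow>
     is_meet P le (fam_upper P le F) x \<and> is_join P le (fam_lower P le F) x"

definition order_convergence_topology :: "'a set \<Rightarrow> ('a \<Rightarrow> 'a \<Rightarrow> bool) \<Rightarrow> 'a set set" where
  "order_convergence_topology P le =
     {U. U \<subseteq> P \<and> (\<forall>x\<in>U. \<forall>F. set_filter_on P F \<and> order_converges P le F x \<longrightarrow> U \<in> F)}"

end

theory Submission
  imports Defs
begin

text \<open>If a filter F order-converges to x and C is a closed set meeting all of its members,
compactness gives a cluster point d of F in C. Total order-disconnectedness makes principal
up- and down-sets closed, so d lies above every element of F^l and below every element of
F^u, which forces d = x. Applied to the complement of an open set U containing x, this
shows that U belongs to every filter order-converging to x.\<close>

lemma
  assumes "set_filter_on P F"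
  shows set_filter_on_nonempty: "F \<noteq> {}"
    and set_filter_on_subset: "A \<in> F \<Longrightarrow> A \<subseteq> P"
    and set_filter_on_Int: "A \<in> F \<Longrightarrow> B \<in> F \<Longrightarrow> A \<inter> B \<in> F"
    and set_filter_on_superset: "A \<in> F \<Longrightarrow> A \<subseteq> B \<Longrightarrow> B \<subseteq> P \<Longrightarrow> B \<in> F"
  using assms unfolding set_filter_on_def by blast+

lemma set_filter_on_Inter:
  assumes "set_filter_on P F" "finite G" "G \<subseteq> F" "G \<noteq> {}"
  shows "\<Inter>G \<in> F"
  using assms(2,4,3)
proof (induction G rule: finite_ne_induct)
  case (insert A G)
  then have "A \<in> F" "\<Inter>G \<in> F" by simp_all
  then show ?case by (simp add: set_filter_on_Int[OF assms(1)])
qed simp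

lemma set_filter_on_meets_complement:
  assumes "set_filter_on P F" "U \<subseteq> P" "U \<notin> F" "A \<in> F"
  shows "A \<inter> (P - U) \<noteq> {}"
proof
  assume "A \<inter> (P - U) = {}"
  then have "A \<subseteq> U" using set_filter_on_subset[OF assms(1,4)] by blast
  then show False using set_filter_on_superset[OF assms(1,4) _ assms(2)] assms(3) by blast
qed

lemma compact_space_filter_cluster_point:
  assumes "compact_space X" "set_filter_on (topspace X) F"
    and "closedin X C" "\<forall>A\<in>F. A \<inter> C \<noteq> {}"
  obtains d where "d \<in> C" "\<And>A. A \<in> F \<Longrightarrow> d \<in> X closure_of A"
proof -
  define K where "K = (\<lambda>A. X closure_of (A \<inter> C)) ` F"
  have fip: "\<Inter>\<G> \<noteq> {}" if fin: "finite \<G>" and sub: "\<G> \<subseteq> K" for \<G>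
  proof (cases "\<G> = {}")
    case False
    obtain G where G: "G \<subseteq> F" "finite G" "\<G> = (\<lambda>A. X closure_of (A \<inter> C)) ` G"
      using finite_subset_image[OF fin sub[unfolded K_def]] by blast
    with False have "G \<noteq> {}" by simp
    with G have "\<Inter>G \<in> F" by (intro set_filter_on_Inter[OF assms(2)])
    then obtain z where z: "z \<in> \<Inter>G" "z \<in> C" using assms(4) by blast
    have "z \<in> X closure_of (A \<inter> C)" if "A \<in> G" for A
    proof (rule closure_of_subset[THEN subsetD])
      show "A \<inter> C \<subseteq> topspace X" using closedin_subset[OF assms(3)] by blast
      show "z \<in> A \<inter> C" using z that by blast
    qed
    then have "z \<in> \<Inter>\<G>" unfolding G(3) by blast
    then show ?thesis by blast
  qed simp
  have "\<Inter>K \<noteq> {}"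
  proof (rule assms(1)[unfolded compact_space_fip, rule_format], intro conjI)
    show "\<forall>S\<in>K. closedin X S" unfolding K_def by simp
    show "\<forall>\<G>. finite \<G> \<and> \<G> \<subseteq> K \<longrightarrow> \<Inter>\<G> \<noteq> {}" using fip by blast
  qed
  then obtain d where d: "\<And>A. A \<in> F \<Longrightarrow> d \<in> X closure_of (A \<inter> C)"
    unfolding K_def by auto
  obtain A0 where "A0 \<in> F" using set_filter_on_nonempty[OF assms(2)] by blast
  moreover have "X closure_of (A0 \<inter> C) \<subseteq> C"
    by (rule closure_of_minimal[OF _ assms(3)]) simp
  ultimately have "d \<in> C" using d by blast
  moreover have "d \<in> X closure_of A" if "A \<in> F" for A
    using d[OF that] closure_of_mono[of "A \<inter> C" A X] by blast
  ultimately show ?thesis using that by blast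
qed

lemma priestley_separation:
  assumes "priestley_space tau le" "x \<in> topspace tau" "y \<in> topspace tau" "\<not> le x y"
  obtains W where "closedin tau W" "openin tau W" "is_up_set (topspace tau) le W"
    "x \<in> W" "y \<notin> W"
  using assms unfolding priestley_space_def by blast

lemma priestley_closedin_principal_up_set:
  assumes "priestley_space tau le" "l \<in> topspace tau"
  shows "closedin tau {z\<in>topspace tau. le l z}"
proof -
  let ?\<W> = "{W. closedin tau W \<and> is_up_set (topspace tau) le W \<and> l \<in> W}"
  have "topspace tau - {z\<in>topspace tau. le l z} = (\<Union>W\<in>?\<W>. topspace tau - W)"
  proof (rule equalityI)
    show "topspace tau - {z\<in>topspace tau. le l z} \<subseteq> (\<Union>W\<in>?\<W>. topspace tau - W)"
    proof
      fix z assume z: "z \<in> topspace tau - {z\<in>topspace tau. le l z}"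
      then obtain W where "closedin tau W" "is_up_set (topspace tau) le W" "l \<in> W" "z \<notin> W"
        using priestley_separation[OF assms] by blast
      with z show "z \<in> (\<Union>W\<in>?\<W>. topspace tau - W)" by blast
    qed
    show "(\<Union>W\<in>?\<W>. topspace tau - W) \<subseteq> topspace tau - {z\<in>topspace tau. le l z}"
      unfolding is_up_set_def by blast
  qed
  moreover have "openin tau (\<Union>W\<in>?\<W>. topspace tau - W)"
    by (intro openin_Union) (auto simp: closedin_def)
  ultimately show ?thesis unfolding closedin_def by auto
qed

lemma priestley_closedin_principal_down_set:
  assumes "priestley_space tau le" "u \<in> topspace tau"
  shows "closedin tau {z\<in>topspace tau. le z u}"
proof -
  let ?\<W> = "{W. openin tau W \<and> is_up_set (topspace tau) le W \<and> u \<notin> W}"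
  have "topspace tau - {z\<in>topspace tau. le z u} = \<Union>?\<W>"
  proof (rule equalityI)
    show "topspace tau - {z\<in>topspace tau. le z u} \<subseteq> \<Union>?\<W>"
    proof
      fix z assume z: "z \<in> topspace tau - {z\<in>topspace tau. le z u}"
      then obtain W where "openin tau W" "is_up_set (topspace tau) le W" "z \<in> W" "u \<notin> W"
        using priestley_separation[OF assms(1) _ assms(2)] by blast
      then show "z \<in> \<Union>?\<W>" by blast
    qed
    show "\<Union>?\<W> \<subseteq> topspace tau - {z\<in>topspace tau. le z u}"
      using assms(2) unfolding is_up_set_def by blast
  qed
  moreover have "openin tau (\<Union>?\<W>)" by (intro openin_Union) simp
  ultimately show ?thesis unfolding closedin_def by auto
qed

lemma priestley_cluster_point_bounds:
  assumes "priestley_space tau le" "set_filter_on (topspace tau) F"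
    and "d \<in> topspace tau" "\<And>A. A \<in> F \<Longrightarrow> d \<in> tau closure_of A"
  shows "d \<in> upper_bounds (topspace tau) le (fam_lower (topspace tau) le F)"
    and "d \<in> lower_bounds (topspace tau) le (fam_upper (topspace tau) le F)"
proof -
  have "le l d" if A: "A \<in> F" and l: "l \<in> lower_bounds (topspace tau) le A" for A l
  proof -
    have "A \<subseteq> {z\<in>topspace tau. le l z}"
      using set_filter_on_subset[OF assms(2) A] l unfolding lower_bounds_def by blast
    moreover have "closedin tau {z\<in>topspace tau. le l z}"
      using l unfolding lower_bounds_def by (intro priestley_closedin_principal_up_set[OF assms(1)]) simp
    ultimately have "tau closure_of A \<subseteq> {z\<in>topspace tau. le l z}" by (rule closure_of_minimal)
    then show ?thesis using assms(4)[OF A] by blast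
  qed
  then show "d \<in> upper_bounds (topspace tau) le (fam_lower (topspace tau) le F)"
    using assms(3) unfolding upper_bounds_def fam_lower_def by blast
  have "le d u" if A: "A \<in> F" and u: "u \<in> upper_bounds (topspace tau) le A" for A u
  proof -
    have "A \<subseteq> {z\<in>topspace tau. le z u}"
      using set_filter_on_subset[OF assms(2) A] u unfolding upper_bounds_def by blast
    moreover have "closedin tau {z\<in>topspace tau. le z u}"
      using u unfolding upper_bounds_def by (intro priestley_closedin_principal_down_set[OF assms(1)]) simp
    ultimately have "tau closure_of A \<subseteq> {z\<in>topspace tau. le z u}" by (rule closure_of_minimal)
    then show ?thesis using assms(4)[OF A] by blast
  qed
  then show "d \<in> lower_bounds (topspace tau) le (fam_upper (topspace tau) le F)"
    using assms(3) unfolding lower_bounds_def fam_upper_def by blast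
qed

lemma order_converges_eqI:
  assumes "partial_order_on_set P le" "order_converges P le F x"
    and "d \<in> upper_bounds P le (fam_lower P le F)"
    and "d \<in> lower_bounds P le (fam_upper P le F)"
  shows "d = x"
proof -
  have meet: "is_meet P le (fam_upper P le F) x" and join: "is_join P le (fam_lower P le F) x"
    using assms(2) unfolding order_converges_def by simp_all
  have "le x d" using join assms(3) unfolding is_join_def by blast
  moreover have "le d x" using meet assms(4) unfolding is_meet_def by blast
  moreover have "x \<in> P" using meet unfolding is_meet_def lower_bounds_def by blast
  moreover have "d \<in> P" using assms(3) unfolding upper_bounds_def by blast
  ultimately show ?thesis using assms(1) unfolding partial_order_on_set_def by blast
qed

lemma priestley_order_limit_in_closed:
  assumes "priestley_space tau le" "set_filter_on (topspace tau) F"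
    and "order_converges (topspace tau) le F x"
    and "closedin tau C" "\<forall>A\<in>F. A \<inter> C \<noteq> {}"
  shows "x \<in> C"
proof -
  have "compact_space tau" using assms(1) unfolding priestley_space_def by simp
  then obtain d where "d \<in> C" and cluster: "\<And>A. A \<in> F \<Longrightarrow> d \<in> tau closure_of A"
    using compact_space_filter_cluster_point[OF _ assms(2,4,5)] by blast
  have "d \<in> topspace tau" using \<open>d \<in> C\<close> closedin_subset[OF assms(4)] by blast
  have "partial_order_on_set (topspace tau) le"
    using assms(1) unfolding priestley_space_def by simp
  then have "d = x"
    using assms(3) priestley_cluster_point_bounds[OF assms(1,2) \<open>d \<in> topspace tau\<close> cluster]
    by (rule order_converges_eqI)
  with \<open>d \<in> C\<close> show ?thesis by simp
qed

theorem corollary2p2: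
  fixes tau :: "'a topology" and le :: "'a \<Rightarrow> 'a \<Rightarrow> bool"
  assumes "priestley_space tau le"
  shows "{U. openin tau U} \<subseteq> order_convergence_topology (topspace tau) le"
proof
  fix U assume "U \<in> {U. openin tau U}"
  then have U: "openin tau U" by simp
  have "U \<in> F"
    if F: "set_filter_on (topspace tau) F" and conv: "order_converges (topspace tau) le F x"
      and "x \<in> U" for x F
  proof (rule ccontr)
    assume "U \<notin> F"
    then have "\<forall>A\<in>F. A \<inter> (topspace tau - U) \<noteq> {}"
      using set_filter_on_meets_complement[OF F openin_subset[OF U]] by blast
    moreover have "closedin tau (topspace tau - U)" using U by (rule closedin_diff[OF closedin_topspace])
    ultimately have "x \<in> topspace tau - U"
      using priestley_order_limit_in_closed[OF assms F conv] by blast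
    with \<open>x \<in> U\<close> show False by simp
  qed
  then show "U \<in> order_convergence_topology (topspace tau) le"
    unfolding order_convergence_topology_def using openin_subset[OF U] by blast
qed

end
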